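(* Let $X$ be a finite simplicial complex, $d\ge 0$, $K_d$ an anti-coloring of $X_d$, and $\Delta_{K_d}\subseteq C_d(X)$ the corresponding anti-synchrony subspace. Fix partitions $\mathcal{P}$ of $X_{d+1}$ and $\mathcal{Q}$ of $X_{d-1}$. Then: (1) $\Delta_{K_d}$ is invariant under $B_{d+1}FB_{d+1}^\intercal$ for all $F\in\mathcal{W}^{d+1}_{\mathcal P}$ if and only if $K_d$ is up-balanced with respect to $\mathcal{P}$; (2) $\Delta_{K_d}$ is invariant under $B_d^\intercal HB_d$ for all $H\in\mathcal{W}^{d-1}_{\mathcal Q}$ if and only if $K_d$ is down-balanced with respect to $\mathcal{Q}$.
   Context: A finite simplicial complex $X$ on vertex set $\{1,\dots,n\}$ is a collection of nonempty subsets closed under taking nonempty subsets; $X_d$ is the set of simplices with $d+1$ vertices; a $d$-simplex with vertices $i_0<\dots<i_d$ is written $[i_0,\dots,i_d]$. $C_d(X)$ is the real vector space with basis $X_d$ (coordinates $x_s$, $s\in X_d$) and inner product making $X_d$ orthonormal ($C_{-1}(X)=0$). The boundary map is $\partial_d[i_0,\dots,i_d]=\sum_{k=0}^d(-1)^k[i_0,\dots,\widehat{i_k},\dots,i_d]$ with matrix $B_d$. For $t\in X_{D}$, $e\in X_{D-1}$, $I^t_e\in\{0,1,-1\}$ is the coefficient of $e$ in $\partial_D t$ (so $I_e^t=(B_D)_{et}$). For a partition $\mathcal P=(P_1,\dots,P_k)$ of $X_D$, $\mathcal{W}^D_{\mathcal P}$ is the set of maps $F:C_D(X)\to C_D(X)$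 with $(F(x))_s=F_s(x_s)$ for odd functions $F_s:\mathbb{R}\to\mathbb{R}$ such that $F_s=F_t$ whenever $s,t$ lie in the same class $P_i$. Let $\mathcal K$ be a finite set of colors, $\mathbb{Z}\mathcal K$ the free $\mathbb{Z}$-module with basis $\mathcal K$, and $\mathbf B_{\mathcal K}=\{k,-k:k\in\mathcal K\}\cup\{0\}\subseteq\mathbb{Z}\mathcal K$. An anti-coloring of $X_d$ is a map $K_d:X_d\to\mathbf B_{\mathcal K}$. Its anti-synchrony space is $\Delta_{K_d}=\{x\in C_d(X): x_s=x_t \text{ if } K_d(s)=K_d(t),\ x_s=-x_t \text{ if } K_d(s)=-K_d(t)\}$ (so $x_s=0$ if $K_d(s)=0$). Induced colorings: $K_d^{\uparrow}:X_{d+1}\to\mathbb{Z}\mathcal K$, $K_d^{\uparrow}(t)=\sum_{e\in X_d}I^t_eK_d(e)$, and $K_d^{\downarrow}:X_{d-1}\to\mathbb{Z}\mathcal K$, $K_d^{\downarrow}(v)=\sum_{e\in X_d}I^e_vK_d(e)$. For a partition $\mathcal P=(P_1,\dots,P_k)$ of $X_{d+1}$, $e\in X_d$, a class $P_i$ and $a\in\mathbb{Z}\mathcal K$, put $U_i^a(e)=\sum_{t\in P_i,\,K^{\uparrow}_d(t)=a}I^t_e-\sum_{t\in P_i,\,K^{\uparrow}_d(t)=-a}I^t_e$. $K_d$ is up-balanced with respect to $\mathcal P$ if for all $e,f\in X_d$, all classes $P_i$ and all $a\in\mathbb{Z}\mathcal K$: $U_i^a(e)=U_i^a(f)$ whenever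 $K_d(e)=K_d(f)$, and $U_i^a(e)=-U_i^a(f)$ whenever $K_d(e)=-K_d(f)$. For a partition $\mathcal Q=(Q_1,\dots,Q_l)$ of $X_{d-1}$, put $D_j^a(e)=\sum_{v\in Q_j,\,K^{\downarrow}_d(v)=a}I^e_v-\sum_{v\in Q_j,\,K^{\downarrow}_d(v)=-a}I^e_v$. $K_d$ is down-balanced with respect to $\mathcal Q$ if for all $e,f\in X_d$, all classes $Q_j$ and all $a\in\mathbb{Z}\mathcal K$: $D_j^a(e)=D_j^a(f)$ whenever $K_d(e)=K_d(f)$, and $D_j^a(e)=-D_j^a(f)$ whenever $K_d(e)=-K_d(f)$. A subspace $W$ is invariant under a map $G$ if $G(W)\subseteq W$. *)

theory Defs
  imports Complex_Main
begin

text \<open>Simplices are represented as finite sets of vertices (natural numbers);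
  a d-simplex is a simplex with d+1 vertices.  Chains in C_d(X) are functions
  on simplices that vanish outside X_d.\<close>

definition simplicial_complex :: "nat \<Rightarrow> nat set set \<Rightarrow> bool" where
  "simplicial_complex n X \<longleftrightarrow>
     (\<forall>s\<in>X. s \<noteq> {} \<and> s \<subseteq> {1..n}) \<and>
     (\<forall>s\<in>X. \<forall>r. r \<noteq> {} \<and> r \<subseteq> s \<longrightarrow> r \<in> X)"

text \<open>simplices of X with exactly k vertices; X_d = faces X (d+1), X_{d-1} = faces X d\<close>
definition faces :: "nat set set \<Rightarrow> nat \<Rightarrow> nat set set" where
  "faces X k = {s \<in> X. card s = k}"

text \<open>Incidence coefficient I^t_e: coefficient of e in the boundary of t
  (vertices ordered increasingly, removing the vertex at position k gives sign (-1)^k)\<close>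
definition incid :: "nat set \<Rightarrow> nat set \<Rightarrow> int" where
  "incid t e = (if e \<subseteq> t \<and> card t = card e + 1
                then (-1) ^ card {u \<in> t. u < the_elem (t - e)} else 0)"

text \<open>chain space C_k(X) for simplices with k vertices\<close>
definition chains :: "nat set set \<Rightarrow> nat \<Rightarrow> (nat set \<Rightarrow> real) set" where
  "chains X k = {x. \<forall>s. s \<notin> faces X k \<longrightarrow> x s = 0}"

definition is_partition :: "'a set set \<Rightarrow> 'a set \<Rightarrow> bool" where
  "is_partition P S \<longleftrightarrow> (\<forall>A\<in>P. A \<noteq> {}) \<and> \<Union>P = S \<and>
     (\<forall>A\<in>P. \<forall>B\<in>P. A \<noteq> B \<longrightarrow> A \<inter> B = {})"

text \<open>The family of componentwise odd maps (Fs s) on C_D with Fs constant on classes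
  of the partition P of the simplices with k vertices (here k = D+1).\<close>
definition W_maps :: "nat set set \<Rightarrow> nat \<Rightarrow> nat set set set \<Rightarrow> (nat set \<Rightarrow> real \<Rightarrow> real) set" where
  "W_maps X k P = {Fs. (\<forall>s\<in>faces X k. \<forall>u. Fs s (- u) = - Fs s u) \<and>
                        (\<forall>A\<in>P. \<forall>s\<in>A. \<forall>t\<in>A. Fs s = Fs t)}"

text \<open>B_{d+1} F B_{d+1}^T acting on C_d (k = d+1 vertices)\<close>
definition up_op :: "nat set set \<Rightarrow> nat \<Rightarrow> (nat set \<Rightarrow> real \<Rightarrow> real) \<Rightarrow> (nat set \<Rightarrow> real) \<Rightarrow> (nat set \<Rightarrow> real)" where
  "up_op X k Fs x = (\<lambda>e. if e \<in> faces X k then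
      (\<Sum>t\<in>faces X (Suc k). of_int (incid t e) * Fs t (\<Sum>f\<in>faces X k. of_int (incid t f) * x f))
      else 0)"

text \<open>B_d^T H B_d acting on C_d (k = d+1 vertices; faces X (k-1) = X_{d-1})\<close>
definition down_op :: "nat set set \<Rightarrow> nat \<Rightarrow> (nat set \<Rightarrow> real \<Rightarrow> real) \<Rightarrow> (nat set \<Rightarrow> real) \<Rightarrow> (nat set \<Rightarrow> real)" where
  "down_op X k H x = (\<lambda>e. if e \<in> faces X k then
      (\<Sum>v\<in>faces X (k - 1). of_int (incid e v) * H v (\<Sum>f\<in>faces X k. of_int (incid f v) * x f))
      else 0)"

text \<open>Elements of the free Z-module Z\<K> are functions 'k \<Rightarrow> int.\<close>
definition basis_col :: "'k \<Rightarrow> 'k \<Rightarrow> int" where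
  "basis_col c = (\<lambda>j. if j = c then 1 else 0)"

definition Bcol :: "'k set \<Rightarrow> ('k \<Rightarrow> int) set" where
  "Bcol Ks = {basis_col c | c. c \<in> Ks} \<union> {(\<lambda>j. - basis_col c j) | c. c \<in> Ks} \<union> {(\<lambda>j. 0)}"

definition anti_coloring :: "nat set set \<Rightarrow> nat \<Rightarrow> 'k set \<Rightarrow> (nat set \<Rightarrow> 'k \<Rightarrow> int) \<Rightarrow> bool" where
  "anti_coloring X k Ks K \<longleftrightarrow> (\<forall>s\<in>faces X k. K s \<in> Bcol Ks)"

definition anti_sync :: "nat set set \<Rightarrow> nat \<Rightarrow> (nat set \<Rightarrow> 'k \<Rightarrow> int) \<Rightarrow> (nat set \<Rightarrow> real) set" where
  "anti_sync X k K = {x \<in> chains X k. \<forall>s\<in>faces X k. \<forall>t\<in>faces X k.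
       (K s = K t \<longrightarrow> x s = x t) \<and> (K s = (\<lambda>j. - K t j) \<longrightarrow> x s = - x t)}"

definition invariant :: "('a set) \<Rightarrow> ('a \<Rightarrow> 'a) \<Rightarrow> bool" where
  "invariant W G \<longleftrightarrow> G ` W \<subseteq> W"

definition col_up :: "nat set set \<Rightarrow> nat \<Rightarrow> (nat set \<Rightarrow> 'k \<Rightarrow> int) \<Rightarrow> nat set \<Rightarrow> 'k \<Rightarrow> int" where
  "col_up X k K t = (\<lambda>j. \<Sum>e\<in>faces X k. incid t e * K e j)"

definition col_down :: "nat set set \<Rightarrow> nat \<Rightarrow> (nat set \<Rightarrow> 'k \<Rightarrow> int) \<Rightarrow> nat set \<Rightarrow> 'k \<Rightarrow> int" where
  "col_down X k K v = (\<lambda>j. \<Sum>e\<in>faces X k. incid e v * K e j)"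

definition U_cnt :: "nat set set \<Rightarrow> nat \<Rightarrow> (nat set \<Rightarrow> 'k \<Rightarrow> int) \<Rightarrow> nat set set \<Rightarrow> ('k \<Rightarrow> int) \<Rightarrow> nat set \<Rightarrow> int" where
  "U_cnt X k K Pi a e =
     (\<Sum>t\<in>{t\<in>Pi. col_up X k K t = a}. incid t e) -
     (\<Sum>t\<in>{t\<in>Pi. col_up X k K t = (\<lambda>j. - a j)}. incid t e)"

definition D_cnt :: "nat set set \<Rightarrow> nat \<Rightarrow> (nat set \<Rightarrow> 'k \<Rightarrow> int) \<Rightarrow> nat set set \<Rightarrow> ('k \<Rightarrow> int) \<Rightarrow> nat set \<Rightarrow> int" where
  "D_cnt X k K Qj a e =
     (\<Sum>v\<in>{v\<in>Qj. col_down X k K v = a}. incid e v) -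
     (\<Sum>v\<in>{v\<in>Qj. col_down X k K v = (\<lambda>j. - a j)}. incid e v)"

definition up_balanced :: "nat set set \<Rightarrow> nat \<Rightarrow> (nat set \<Rightarrow> 'k \<Rightarrow> int) \<Rightarrow> nat set set set \<Rightarrow> bool" where
  "up_balanced X k K P \<longleftrightarrow> (\<forall>e\<in>faces X k. \<forall>f\<in>faces X k. \<forall>Pi\<in>P. \<forall>a.
     (K e = K f \<longrightarrow> U_cnt X k K Pi a e = U_cnt X k K Pi a f) \<and>
     (K e = (\<lambda>j. - K f j) \<longrightarrow> U_cnt X k K Pi a e = - U_cnt X k K Pi a f))"

definition down_balanced :: "nat set set \<Rightarrow> nat \<Rightarrow> (nat set \<Rightarrow> 'k \<Rightarrow> int) \<Rightarrow> nat set set set \<Rightarrow> bool" where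
  "down_balanced X k K Q \<longleftrightarrow> (\<forall>e\<in>faces X k. \<forall>f\<in>faces X k. \<forall>Qj\<in>Q. \<forall>a.
     (K e = K f \<longrightarrow> D_cnt X k K Qj a e = D_cnt X k K Qj a f) \<and>
     (K e = (\<lambda>j. - K f j) \<longrightarrow> D_cnt X k K Qj a e = - D_cnt X k K Qj a f))"

end

theory Submission
  imports Defs "HOL-Computational_Algebra.Polynomial"
begin

text \<open>Both parts are instances of one statement about operators M F M^T, where M is an integer
  matrix with rows indexed by X_d (B_{d+1} for the up part, B_d^T for the down part).  An
  anti-synchronous chain has the form x = L \<circ> K_d for a linear form L on ZK, so (M^T x)_t =
  L (K' t) only depends on the induced colour K' t (K_d^up resp. K_d^down).  Grouping each class
  sum by induced colours and pairing a with -a (F is odd) writes (M F M^T x)_e as a combination of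
  the signed counts U^a_i(e) resp. D^a_j(e) with coefficients F(L a); balancedness makes these
  agree, up to sign, on equally resp. oppositely coloured simplices.  Conversely, choose L injective
  on the finitely many induced colours and F the odd signed indicator of L a on a single class:
  then (M F M^T x)_e is exactly the signed count, so invariance forces balancedness.\<close>

definition lin_ext :: "'k set \<Rightarrow> ('k \<Rightarrow> real) \<Rightarrow> ('k \<Rightarrow> int) \<Rightarrow> real" where
  "lin_ext Ks y a = (\<Sum>j\<in>Ks. of_int (a j) * y j)"

lemma lin_ext_uminus [simp]: "lin_ext Ks y (\<lambda>j. - a j) = - lin_ext Ks y a"
  by (simp add: lin_ext_def sum_negf[symmetric])

lemma lin_ext_zero [simp]: "lin_ext Ks y (\<lambda>j. 0) = 0"
  by (simp add: lin_ext_def)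

lemma lin_ext_basis_col:
  assumes "finite Ks" and "c \<in> Ks"
  shows "lin_ext Ks y (basis_col c) = y c"
proof -
  have "lin_ext Ks y (basis_col c) = (\<Sum>j\<in>Ks. if j = c then y j else 0)"
    unfolding lin_ext_def by (intro sum.cong) (auto simp: basis_col_def)
  then show ?thesis
    using assms by simp
qed

text \<open>Take y j = s ^ ix j for an injective numbering ix of Ks: then lin_ext Ks y a is the value
  at s of a polynomial with coefficients a j, and s only has to avoid the roots of finitely many
  nonzero difference polynomials.\<close>
lemma exists_inj_on_lin_ext:
  fixes S :: "('k \<Rightarrow> int) set"
  assumes "finite Ks" and "finite S" and supp: "\<And>a j. a \<in> S \<Longrightarrow> j \<notin> Ks \<Longrightarrow> a j = 0"
  obtains y where "inj_on (lin_ext Ks y) S"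
proof -
  obtain ix :: "'k \<Rightarrow> nat" where ix: "inj_on ix Ks"
    using finite_imp_inj_to_nat_seg[OF \<open>finite Ks\<close>] by blast
  define p where "p d = (\<Sum>j\<in>Ks. monom (of_int (d j) :: real) (ix j))" for d :: "'k \<Rightarrow> int"
  have poly_p: "poly (p d) s = lin_ext Ks (\<lambda>j. s ^ ix j) d" for d s
    by (simp add: p_def lin_ext_def poly_sum poly_monom)
  have p_nonzero: "p (\<lambda>j. a j - b j) \<noteq> 0" if "a \<in> S" "b \<in> S" "a \<noteq> b" for a b
  proof -
    obtain j0 where j0: "a j0 \<noteq> b j0"
      using \<open>a \<noteq> b\<close> by auto
    with supp that have "j0 \<in> Ks"
      by metis
    have "coeff (p (\<lambda>j. a j - b j)) (ix j0) = (\<Sum>j\<in>Ks. if j = j0 then of_int (a j - b j) else 0)"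
      unfolding p_def coeff_sum coeff_monom
      using ix \<open>j0 \<in> Ks\<close> by (intro sum.cong) (auto simp: inj_on_def)
    also have "\<dots> = of_int (a j0 - b j0)"
      using \<open>finite Ks\<close> \<open>j0 \<in> Ks\<close> by simp
    finally show ?thesis
      using j0 by auto
  qed
  define Bad where "Bad = (\<Union>(a, b)\<in>(S \<times> S) - Id. {s. poly (p (\<lambda>j. a j - b j)) s = 0})"
  have "finite Bad"
    unfolding Bad_def using \<open>finite S\<close> p_nonzero poly_roots_finite by auto
  then obtain s :: real where "s \<notin> Bad"
    using ex_new_if_finite infinite_UNIV_char_0 by blast
  have "inj_on (lin_ext Ks (\<lambda>j. s ^ ix j)) S"
  proof (rule inj_onI)
    fix a b
    assume "a \<in> S" "b \<in> S" and "lin_ext Ks (\<lambda>j. s ^ ix j) a = lin_ext Ks (\<lambda>j. s ^ ix j) b"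
    then have "poly (p (\<lambda>j. a j - b j)) s = 0"
      by (simp add: poly_p lin_ext_def left_diff_distrib sum_subtractf)
    then show "a = b"
      using \<open>s \<notin> Bad\<close> \<open>a \<in> S\<close> \<open>b \<in> S\<close> unfolding Bad_def by auto
  qed
  then show ?thesis
    using that by blast
qed

definition antisync :: "'a set \<Rightarrow> ('a \<Rightarrow> 'k \<Rightarrow> int) \<Rightarrow> ('a \<Rightarrow> real) set" where
  "antisync E K = {x. (\<forall>s. s \<notin> E \<longrightarrow> x s = 0) \<and> (\<forall>s\<in>E. \<forall>t\<in>E.
     (K s = K t \<longrightarrow> x s = x t) \<and> (K s = (\<lambda>j. - K t j) \<longrightarrow> x s = - x t))}"

definition induced_coloring :: "'a set \<Rightarrow> ('a \<Rightarrow> 'b \<Rightarrow> int) \<Rightarrow> ('a \<Rightarrow> 'k \<Rightarrow> int) \<Rightarrow> 'b \<Rightarrow> 'k \<Rightarrow> int"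
  where "induced_coloring E c K t = (\<lambda>j. \<Sum>e\<in>E. c e t * K e j)"

text \<open>M F M^T for the E \<times> T integer matrix M = c: up_op and down_op are the cases
  c e t = incid t e and c e t = incid e t.\<close>
definition sandwich_op ::
    "'a set \<Rightarrow> 'b set \<Rightarrow> ('a \<Rightarrow> 'b \<Rightarrow> int) \<Rightarrow> ('b \<Rightarrow> real \<Rightarrow> real) \<Rightarrow> ('a \<Rightarrow> real) \<Rightarrow> 'a \<Rightarrow> real"
  where "sandwich_op E T c F x =
    (\<lambda>e. if e \<in> E then \<Sum>t\<in>T. of_int (c e t) * F t (\<Sum>f\<in>E. of_int (c f t) * x f) else 0)"

lemma Bcol_cases:
  assumes "v \<in> Bcol Ks"
  obtains c where "c \<in> Ks" "v = basis_col c" | c where "c \<in> Ks" "v = (\<lambda>j. - basis_col c j)"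
    | "v = (\<lambda>j. 0)"
  using assms unfolding Bcol_def by blast

lemma Bcol_vanishes_outside: "v \<in> Bcol Ks \<Longrightarrow> j \<notin> Ks \<Longrightarrow> v j = 0"
  by (auto simp: Bcol_def basis_col_def)

lemma induced_coloring_vanishes_outside:
  assumes "\<forall>e\<in>E. K e \<in> Bcol Ks" and "j \<notin> Ks"
  shows "induced_coloring E c K t j = 0"
proof -
  have "K e j = 0" if "e \<in> E" for e
    using assms that by (intro Bcol_vanishes_outside) auto
  then show ?thesis
    by (simp add: induced_coloring_def)
qed

lemma lin_ext_in_antisync: "(\<lambda>f. if f \<in> E then lin_ext Ks y (K f) else 0) \<in> antisync E K"
  by (auto simp: antisync_def)

lemma antisync_common_value:
  assumes "x \<in> antisync E K"
  obtains v where "\<forall>f\<in>E. K f = b \<longrightarrow> x f = v" and "\<forall>f\<in>E. K f = (\<lambda>j. - b j) \<longrightarrow> x f = - v"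
proof -
  have sync: "x f = x g" if "f \<in> E" "g \<in> E" "K f = K g" for f g
    using assms that unfolding antisync_def by blast
  have anti: "x f = - x g" if "f \<in> E" "g \<in> E" "K f = (\<lambda>j. - K g j)" for f g
    using assms that unfolding antisync_def by blast
  consider (pos) g where "g \<in> E" "K g = b" | (neg) g where "g \<in> E" "K g = (\<lambda>j. - b j)"
    | (none) "\<forall>f\<in>E. K f \<noteq> b \<and> K f \<noteq> (\<lambda>j. - b j)"
    by blast
  then show ?thesis
  proof cases
    case (pos g)
    show ?thesis
    proof (intro that[of "x g"] ballI impI)
      fix f
      assume "f \<in> E"
      show "x f = x g" if "K f = b"
        using sync[OF \<open>f \<in> E\<close> \<open>g \<in> E\<close>] that pos(2) by simp
      show "x f = - x g" if "K f = (\<lambda>j. - b j)"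
        using anti[OF \<open>f \<in> E\<close> \<open>g \<in> E\<close>] that pos(2) by simp
    qed
  next
    case (neg g)
    show ?thesis
    proof (intro that[of "- x g"] ballI impI)
      fix f
      assume "f \<in> E"
      show "x f = - x g" if "K f = b"
        using anti[OF \<open>f \<in> E\<close> \<open>g \<in> E\<close>] that neg(2) by simp
      show "x f = - (- x g)" if "K f = (\<lambda>j. - b j)"
        using sync[OF \<open>f \<in> E\<close> \<open>g \<in> E\<close>] that neg(2) by simp
    qed
  next
    case none
    then show ?thesis
      by (intro that[of 0]) auto
  qed
qed

lemma antisync_factors_through_lin_ext:
  assumes "finite Ks" and K: "\<forall>f\<in>E. K f \<in> Bcol Ks" and "x \<in> antisync E K"
  obtains y where "\<forall>f\<in>E. x f = lin_ext Ks y (K f)"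
proof -
  have "\<exists>v. \<forall>f\<in>E. (K f = basis_col c \<longrightarrow> x f = v) \<and> (K f = (\<lambda>j. - basis_col c j) \<longrightarrow> x f = - v)"
    for c
  proof -
    obtain v where "\<forall>f\<in>E. K f = basis_col c \<longrightarrow> x f = v"
      and "\<forall>f\<in>E. K f = (\<lambda>j. - basis_col c j) \<longrightarrow> x f = - v"
      by (rule antisync_common_value[OF \<open>x \<in> antisync E K\<close>])
    then show ?thesis
      by blast
  qed
  then obtain y where y: "\<And>c. \<forall>f\<in>E.
      (K f = basis_col c \<longrightarrow> x f = y c) \<and> (K f = (\<lambda>j. - basis_col c j) \<longrightarrow> x f = - y c)"
    by (metis choice)
  have "x f = lin_ext Ks y (K f)" if "f \<in> E" for f
    using K[rule_format, OF that]
  proof (cases rule: Bcol_cases)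
    case (1 c)
    then show ?thesis
      using y[of c, rule_format, OF that] lin_ext_basis_col[OF \<open>finite Ks\<close>] by simp
  next
    case (2 c)
    then show ?thesis
      using y[of c, rule_format, OF that] lin_ext_basis_col[OF \<open>finite Ks\<close>] by simp
  next
    case 3
    then have "K f = (\<lambda>j. - K f j)"
      by simp
    then have "x f = - x f"
      using \<open>x \<in> antisync E K\<close> that unfolding antisync_def by blast
    with 3 show ?thesis
      by simp
  qed
  then show ?thesis
    using that by blast
qed

lemma sandwich_op_lin_ext:
  assumes "\<forall>f\<in>E. x f = lin_ext Ks y (K f)" and "e \<in> E"
  shows "sandwich_op E T c F x e =
    (\<Sum>t\<in>T. of_int (c e t) * F t (lin_ext Ks y (induced_coloring E c K t)))"
proof -
  have "(\<Sum>f\<in>E. of_int (c f t) * x f) = lin_ext Ks y (induced_coloring E c K t)" for t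
  proof -
    have "(\<Sum>f\<in>E. of_int (c f t) * x f) = (\<Sum>f\<in>E. \<Sum>j\<in>Ks. of_int (c f t) * of_int (K f j) * y j)"
      using assms(1) by (simp add: lin_ext_def sum_distrib_left mult.assoc)
    also have "\<dots> = (\<Sum>j\<in>Ks. \<Sum>f\<in>E. of_int (c f t) * of_int (K f j) * y j)"
      by (rule sum.swap)
    also have "\<dots> = lin_ext Ks y (induced_coloring E c K t)"
      by (simp add: lin_ext_def induced_coloring_def sum_distrib_right)
    finally show ?thesis .
  qed
  then show ?thesis
    using assms(2) by (simp add: sandwich_op_def)
qed

definition signed_count :: "'t set \<Rightarrow> ('t \<Rightarrow> 'k \<Rightarrow> int) \<Rightarrow> ('t \<Rightarrow> int) \<Rightarrow> ('k \<Rightarrow> int) \<Rightarrow> int" where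
  "signed_count A g w a = (\<Sum>t\<in>{t\<in>A. g t = a}. w t) - (\<Sum>t\<in>{t\<in>A. g t = (\<lambda>j. - a j)}. w t)"

lemma signed_count_eq_zero:
  assumes "a \<notin> g ` A \<union> (\<lambda>a j. - a j) ` g ` A"
  shows "signed_count A g w a = 0"
proof -
  have "{t \<in> A. g t = a} = {}"
    using assms by auto
  moreover have "{t \<in> A. g t = (\<lambda>j. - a j)} = {}"
  proof -
    have "a = (\<lambda>j. - g t j)" if "g t = (\<lambda>j. - a j)" for t
      using that by auto
    then show ?thesis
      using assms by blast
  qed
  ultimately show ?thesis
    unfolding signed_count_def by (simp only: sum.empty diff_self)
qed

lemma signed_count_zero [simp]: "signed_count A g w (\<lambda>j. 0) = 0"
  by (simp add: signed_count_def)

lemma sum_odd_eq_signed_counts: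
  fixes h :: "('k \<Rightarrow> int) \<Rightarrow> real"
  assumes "finite A" and odd: "\<And>a. h (\<lambda>j. - a j) = - h a"
  shows "2 * (\<Sum>t\<in>A. of_int (w t) * h (g t)) =
    (\<Sum>a\<in>g ` A \<union> (\<lambda>a j. - a j) ` g ` A. of_int (signed_count A g w a) * h a)"
proof -
  define V where "V = g ` A \<union> (\<lambda>a j. - a j) ` g ` A"
  define N where "N a = (\<Sum>t\<in>{t\<in>A. g t = a}. w t)" for a
  have "finite V"
    unfolding V_def using \<open>finite A\<close> by simp
  have grouped: "(\<Sum>t\<in>A. of_int (w t) * h (g t)) = (\<Sum>a\<in>V. of_int (N a) * h a)"
  proof -
    have "(\<Sum>t\<in>A. of_int (w t) * h (g t)) = (\<Sum>a\<in>V. \<Sum>t\<in>{t\<in>A. g t = a}. of_int (w t) * h (g t))"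
      using sum.group[OF \<open>finite A\<close> \<open>finite V\<close>, of g "\<lambda>t. of_int (w t) * h (g t)"]
      unfolding V_def by auto
    also have "\<dots> = (\<Sum>a\<in>V. of_int (N a) * h a)"
      unfolding N_def of_int_sum sum_distrib_right by (intro sum.cong) auto
    finally show ?thesis .
  qed
  have "(\<Sum>a\<in>V. of_int (N (\<lambda>j. - a j)) * h a) = (\<Sum>a\<in>V. of_int (N a) * h (\<lambda>j. - a j))"
    by (rule sum.reindex_bij_witness[of _ "\<lambda>a j. - a j" "\<lambda>a j. - a j"]) (auto simp: V_def)
  also have "\<dots> = - (\<Sum>a\<in>V. of_int (N a) * h a)"
    by (simp add: odd sum_negf)
  finally have reflected: "(\<Sum>a\<in>V. of_int (N (\<lambda>j. - a j)) * h a) = - (\<Sum>a\<in>V. of_int (N a) * h a)" .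
  have "(\<Sum>a\<in>V. of_int (signed_count A g w a) * h a)
      = (\<Sum>a\<in>V. of_int (N a) * h a) - (\<Sum>a\<in>V. of_int (N (\<lambda>j. - a j)) * h a)"
    by (simp add: signed_count_def N_def left_diff_distrib sum_subtractf)
  then show ?thesis
    using grouped reflected unfolding V_def by linarith
qed

lemma sum_odd_eq_if_signed_counts_eq:
  fixes h :: "('k \<Rightarrow> int) \<Rightarrow> real"
  assumes "finite A" and "\<And>a. h (\<lambda>j. - a j) = - h a"
    and counts: "\<And>a. signed_count A g w a = \<sigma> * signed_count A g w' a"
  shows "(\<Sum>t\<in>A. of_int (w t) * h (g t)) = of_int \<sigma> * (\<Sum>t\<in>A. of_int (w' t) * h (g t))"
proof -
  have "2 * (\<Sum>t\<in>A. of_int (w t) * h (g t)) = of_int \<sigma> * (2 * (\<Sum>t\<in>A. of_int (w' t) * h (g t)))"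
    unfolding sum_odd_eq_signed_counts[of A h, OF assms(1,2)] counts
    by (simp add: sum_distrib_left mult.assoc)
  then show ?thesis
    by simp
qed

definition signed_indicator :: "real \<Rightarrow> real \<Rightarrow> real" where
  "signed_indicator l u = (if u = l then 1 else if u = - l then -1 else 0)"

lemma signed_indicator_odd: "l \<noteq> 0 \<Longrightarrow> signed_indicator l (- u) = - signed_indicator l u"
  by (auto simp: signed_indicator_def)

lemma sum_signed_indicator:
  fixes h :: "('k \<Rightarrow> int) \<Rightarrow> real"
  assumes "finite A" and inj: "inj_on h (g ` A \<union> {a, \<lambda>j. - a j})"
    and "h (\<lambda>j. - a j) = - h a" and "h a \<noteq> 0"
  shows "(\<Sum>t\<in>A. of_int (w t) * signed_indicator (h a) (h (g t))) = of_int (signed_count A g w a)"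
proof -
  have "of_int (w t) * signed_indicator (h a) (h (g t)) =
      (if g t = a then of_int (w t) else 0) - (if g t = (\<lambda>j. - a j) then of_int (w t) else 0)"
    if "t \<in> A" for t
  proof -
    have "g t = a \<longleftrightarrow> h (g t) = h a"
      using inj_on_eq_iff[OF inj, of "g t" a] that by auto
    moreover have "g t = (\<lambda>j. - a j) \<longleftrightarrow> h (g t) = - h a"
      using inj_on_eq_iff[OF inj, of "g t" "\<lambda>j. - a j"] that assms(3) by auto
    moreover have "a \<noteq> (\<lambda>j. - a j)"
      using assms(3,4) by force
    ultimately show ?thesis
      unfolding signed_indicator_def using assms(4) by auto
  qed
  then have "(\<Sum>t\<in>A. of_int (w t) * signed_indicator (h a) (h (g t))) =
      (\<Sum>t\<in>A. if g t = a then of_int (w t) else 0) - (\<Sum>t\<in>A. if g t = (\<lambda>j. - a j) then of_int (w t) else 0)"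
    by (simp add: sum_subtractf[symmetric] cong: sum.cong)
  also have "\<dots> = of_int (signed_count A g w a)"
    unfolding signed_count_def of_int_diff of_int_sum using \<open>finite A\<close> by (simp add: sum.inter_filter)
  finally show ?thesis .
qed

definition odd_maps :: "'b set \<Rightarrow> 'b set set \<Rightarrow> ('b \<Rightarrow> real \<Rightarrow> real) set" where
  "odd_maps T P = {F. (\<forall>t\<in>T. \<forall>u. F t (- u) = - F t u) \<and> (\<forall>A\<in>P. \<forall>s\<in>A. \<forall>t\<in>A. F s = F t)}"

definition balanced :: "'a set \<Rightarrow> ('a \<Rightarrow> 'b \<Rightarrow> int) \<Rightarrow> ('a \<Rightarrow> 'k \<Rightarrow> int) \<Rightarrow> 'b set set \<Rightarrow> bool" where
  "balanced E c K P \<longleftrightarrow> (\<forall>e\<in>E. \<forall>f\<in>E. \<forall>A\<in>P. \<forall>a.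
     (K e = K f \<longrightarrow>
        signed_count A (induced_coloring E c K) (c e) a = signed_count A (induced_coloring E c K) (c f) a) \<and>
     (K e = (\<lambda>j. - K f j) \<longrightarrow>
        signed_count A (induced_coloring E c K) (c e) a = - signed_count A (induced_coloring E c K) (c f) a))"

lemma partition_class_subset: "is_partition P T \<Longrightarrow> A \<in> P \<Longrightarrow> A \<subseteq> T"
  unfolding is_partition_def by blast

lemma partition_class_nonempty: "is_partition P T \<Longrightarrow> A \<in> P \<Longrightarrow> A \<noteq> {}"
  unfolding is_partition_def by blast

lemma sum_partition:
  assumes "is_partition P T" and "finite T"
  shows "sum g T = (\<Sum>A\<in>P. sum g A)"
proof -
  have "\<forall>A\<in>P. finite A"
    using finite_subset[OF partition_class_subset[OF assms(1)] assms(2)] by blast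
  moreover have "\<forall>A\<in>P. \<forall>B\<in>P. A \<noteq> B \<longrightarrow> A \<inter> B = {}" and "T = \<Union>P"
    using assms(1) unfolding is_partition_def by auto
  ultimately show ?thesis
    using sum.Union_disjoint[of P g] by simp
qed

lemma class_indicator_in_odd_maps:
  assumes "is_partition P T" and "A \<in> P" and "\<And>u. G (- u) = - G u"
  shows "(\<lambda>t. if t \<in> A then G else (\<lambda>u. 0)) \<in> odd_maps T P"
  unfolding odd_maps_def
proof (intro CollectI conjI ballI allI)
  fix B s t
  assume "B \<in> P" "s \<in> B" "t \<in> B"
  moreover have "A = B \<or> A \<inter> B = {}"
    using assms(1,2) \<open>B \<in> P\<close> unfolding is_partition_def by blast
  ultimately have "s \<in> A \<longleftrightarrow> t \<in> A"
    by blast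
  then show "(if s \<in> A then G else (\<lambda>u. 0)) = (if t \<in> A then G else (\<lambda>u. 0))"
    by simp
qed (simp add: assms(3))

lemma sandwich_op_realizes_signed_count:
  assumes "finite T" and part: "is_partition P T" and "A \<in> P"
    and x: "\<forall>f\<in>E. x f = lin_ext Ks y (K f)"
    and inj: "inj_on (lin_ext Ks y) (induced_coloring E c K ` A \<union> {a, \<lambda>j. - a j})"
    and "lin_ext Ks y a \<noteq> 0"
  obtains F where "F \<in> odd_maps T P"
    and "\<forall>e\<in>E. sandwich_op E T c F x e = of_int (signed_count A (induced_coloring E c K) (c e) a)"
proof -
  define g where "g = induced_coloring E c K"
  define h where "h = lin_ext Ks y"
  define F where "F t = (if t \<in> A then signed_indicator (h a) else (\<lambda>u. 0))" for t
  have "A \<subseteq> T"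
    using partition_class_subset[OF part \<open>A \<in> P\<close>] .
  then have "finite A"
    using \<open>finite T\<close> by (rule finite_subset)
  have "F \<in> odd_maps T P"
    unfolding F_def h_def using class_indicator_in_odd_maps[OF part \<open>A \<in> P\<close>]
      signed_indicator_odd[OF \<open>lin_ext Ks y a \<noteq> 0\<close>] by blast
  moreover have "sandwich_op E T c F x e = of_int (signed_count A g (c e) a)" if "e \<in> E" for e
  proof -
    have "sandwich_op E T c F x e =
        (\<Sum>t\<in>T. if t \<in> A then of_int (c e t) * signed_indicator (h a) (h (g t)) else 0)"
      unfolding sandwich_op_lin_ext[OF x that] F_def g_def h_def by (intro sum.cong) auto
    also have "\<dots> = (\<Sum>t\<in>A. of_int (c e t) * signed_indicator (h a) (h (g t)))"
      by (simp add: sum.inter_restrict[OF \<open>finite T\<close>, symmetric] Int_absorb1[OF \<open>A \<subseteq> T\<close>])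
    also have "\<dots> = of_int (signed_count A g (c e) a)"
      unfolding g_def h_def
      by (rule sum_signed_indicator[OF \<open>finite A\<close> inj _ \<open>lin_ext Ks y a \<noteq> 0\<close>]) simp
    finally show ?thesis .
  qed
  ultimately show ?thesis
    using that unfolding g_def by blast
qed

text \<open>The witness x is L \<circ> K for a linear form L that separates all induced colours and their
  negatives from each other and from 0.\<close>
lemma balanced_if_invariant:
  fixes K :: "'a \<Rightarrow> 'k \<Rightarrow> int"
  assumes "finite T" and "finite Ks" and K: "\<forall>f\<in>E. K f \<in> Bcol Ks" and part: "is_partition P T"
    and inv: "\<forall>F\<in>odd_maps T P. invariant (antisync E K) (sandwich_op E T c F)"
  shows "balanced E c K P"
proof -
  define g where "g = induced_coloring E c K"
  define S where "S = g ` T \<union> (\<lambda>a j. - a j) ` g ` T \<union> {\<lambda>j. 0}"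
  have "finite S"
    using \<open>finite T\<close> by (simp add: S_def)
  moreover have "a j = 0" if "a \<in> S" "j \<notin> Ks" for a j
    using that induced_coloring_vanishes_outside[OF K] unfolding S_def g_def by auto
  ultimately obtain y where inj: "inj_on (lin_ext Ks y) S"
    using exists_inj_on_lin_ext[OF \<open>finite Ks\<close>] by blast
  define x where "x f = (if f \<in> E then lin_ext Ks y (K f) else 0)" for f
  have "x \<in> antisync E K"
    unfolding x_def by (rule lin_ext_in_antisync)
  have realized: "\<exists>F\<in>odd_maps T P. \<forall>e\<in>E. sandwich_op E T c F x e = of_int (signed_count A g (c e) a)"
    if "A \<in> P" for A a
  proof (cases "a \<noteq> (\<lambda>j. 0) \<and> a \<in> g ` A \<union> (\<lambda>a j. - a j) ` g ` A")
    case True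
    have "A \<subseteq> T"
      using partition_class_subset[OF part \<open>A \<in> P\<close>] .
    from True obtain t where "t \<in> A" and "a = g t \<or> a = (\<lambda>j. - g t j)"
      by auto
    with \<open>A \<subseteq> T\<close> have "a \<in> S" and "(\<lambda>j. - a j) \<in> S"
      unfolding S_def by auto
    with \<open>A \<subseteq> T\<close> have "g ` A \<union> {a, \<lambda>j. - a j} \<subseteq> S"
      unfolding S_def by auto
    with inj have "inj_on (lin_ext Ks y) (g ` A \<union> {a, \<lambda>j. - a j})"
      by (rule inj_on_subset)
    moreover have "lin_ext Ks y a \<noteq> 0"
      using inj_on_eq_iff[OF inj \<open>a \<in> S\<close>, of "\<lambda>j. 0"] True by (simp add: S_def)
    moreover have "\<forall>f\<in>E. x f = lin_ext Ks y (K f)"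
      by (simp add: x_def)
    ultimately obtain F where "F \<in> odd_maps T P"
      and "\<forall>e\<in>E. sandwich_op E T c F x e = of_int (signed_count A g (c e) a)"
      using sandwich_op_realizes_signed_count[OF \<open>finite T\<close> part \<open>A \<in> P\<close>] unfolding g_def by blast
    then show ?thesis
      by blast
  next
    case False
    then have "signed_count A g (c e) a = 0" for e
      using signed_count_eq_zero[of a g A] by (cases "a = (\<lambda>j. 0)") auto
    moreover have "(\<lambda>t u. 0) \<in> odd_maps T P"
      by (simp add: odd_maps_def)
    ultimately show ?thesis
      by (intro bexI[of _ "\<lambda>t u. 0"]) (simp_all add: sandwich_op_def)
  qed
  show ?thesis
    unfolding balanced_def g_def[symmetric]
  proof (intro ballI allI conjI impI)
    fix e f A a
    assume "e \<in> E" "f \<in> E" "A \<in> P"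
    obtain F where "F \<in> odd_maps T P"
      and F: "\<forall>e\<in>E. sandwich_op E T c F x e = of_int (signed_count A g (c e) a)"
      using realized[OF \<open>A \<in> P\<close>] by blast
    then have "sandwich_op E T c F x \<in> antisync E K"
      using inv \<open>x \<in> antisync E K\<close> unfolding invariant_def by blast
    then have sync: "K e = K f \<Longrightarrow> sandwich_op E T c F x e = sandwich_op E T c F x f"
      and anti: "K e = (\<lambda>j. - K f j) \<Longrightarrow> sandwich_op E T c F x e = - sandwich_op E T c F x f"
      using \<open>e \<in> E\<close> \<open>f \<in> E\<close> unfolding antisync_def by blast+
    show "signed_count A g (c e) a = signed_count A g (c f) a" if "K e = K f"
      using sync[OF that] F \<open>e \<in> E\<close> \<open>f \<in> E\<close> by simp
    show "signed_count A g (c e) a = - signed_count A g (c f) a" if "K e = (\<lambda>j. - K f j)"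
      using anti[OF that] F \<open>e \<in> E\<close> \<open>f \<in> E\<close> by simp
  qed
qed

lemma sandwich_op_scaled_if_signed_counts_scaled:
  assumes "finite T" and part: "is_partition P T" and F: "F \<in> odd_maps T P"
    and x: "\<forall>f\<in>E. x f = lin_ext Ks y (K f)" and "e \<in> E" and "e' \<in> E"
    and counts: "\<And>A a. A \<in> P \<Longrightarrow>
      signed_count A (induced_coloring E c K) (c e) a = \<sigma> * signed_count A (induced_coloring E c K) (c e') a"
  shows "sandwich_op E T c F x e = of_int \<sigma> * sandwich_op E T c F x e'"
proof -
  define g where "g = induced_coloring E c K"
  define h where "h = lin_ext Ks y"
  have class_sum: "(\<Sum>t\<in>A. of_int (c e t) * F t (h (g t))) =
      of_int \<sigma> * (\<Sum>t\<in>A. of_int (c e' t) * F t (h (g t)))" if "A \<in> P" for A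
  proof -
    obtain t0 where "t0 \<in> A"
      using partition_class_nonempty[OF part \<open>A \<in> P\<close>] by blast
    define G where "G = F t0"
    have "A \<subseteq> T"
      using partition_class_subset[OF part \<open>A \<in> P\<close>] .
    then have "finite A"
      using \<open>finite T\<close> by (rule finite_subset)
    have F_A: "F t = G" if "t \<in> A" for t
      using F \<open>A \<in> P\<close> \<open>t0 \<in> A\<close> that unfolding odd_maps_def G_def by blast
    have "G (- u) = - G u" for u
      using F \<open>t0 \<in> A\<close> \<open>A \<subseteq> T\<close> unfolding odd_maps_def G_def by blast
    then have odd: "(G \<circ> h) (\<lambda>j. - a j) = - (G \<circ> h) a" for a
      by (simp add: h_def)
    have F_sum: "(\<Sum>t\<in>A. of_int (w t) * F t (h (g t))) = (\<Sum>t\<in>A. of_int (w t) * (G \<circ> h) (g t))"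
      for w
      using F_A by (intro sum.cong) auto
    show ?thesis
      unfolding F_sum using counts[OF \<open>A \<in> P\<close>] unfolding g_def[symmetric]
      by (rule sum_odd_eq_if_signed_counts_eq[of A "G \<circ> h", OF \<open>finite A\<close> odd])
  qed
  have "sandwich_op E T c F x e'' = (\<Sum>A\<in>P. \<Sum>t\<in>A. of_int (c e'' t) * F t (h (g t)))"
    if "e'' \<in> E" for e''
    unfolding sandwich_op_lin_ext[OF x that] sum_partition[OF part \<open>finite T\<close>] g_def h_def ..
  with \<open>e \<in> E\<close> \<open>e' \<in> E\<close> show ?thesis
    using class_sum by (simp add: sum_distrib_left)
qed

lemma invariant_if_balanced:
  fixes K :: "'a \<Rightarrow> 'k \<Rightarrow> int"
  assumes "finite T" and "finite Ks" and K: "\<forall>f\<in>E. K f \<in> Bcol Ks" and part: "is_partition P T"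
    and bal: "balanced E c K P" and F: "F \<in> odd_maps T P"
  shows "invariant (antisync E K) (sandwich_op E T c F)"
  unfolding invariant_def
proof (rule image_subsetI)
  fix x
  assume "x \<in> antisync E K"
  then obtain y where y: "\<forall>f\<in>E. x f = lin_ext Ks y (K f)"
    by (rule antisync_factors_through_lin_ext[OF \<open>finite Ks\<close> K])
  note scaled = sandwich_op_scaled_if_signed_counts_scaled[OF \<open>finite T\<close> part F y]
  show "sandwich_op E T c F x \<in> antisync E K"
    unfolding antisync_def
  proof (intro CollectI conjI allI impI ballI)
    fix s
    assume "s \<notin> E"
    then show "sandwich_op E T c F x s = 0"
      by (simp add: sandwich_op_def)
  next
    fix s t
    assume "s \<in> E" "t \<in> E"
    note counts = bal[unfolded balanced_def, rule_format, OF \<open>s \<in> E\<close> \<open>t \<in> E\<close>]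
    show "sandwich_op E T c F x s = sandwich_op E T c F x t" if "K s = K t"
      using scaled[OF \<open>s \<in> E\<close> \<open>t \<in> E\<close>, where \<sigma> = 1] counts that by simp
    show "sandwich_op E T c F x s = - sandwich_op E T c F x t" if "K s = (\<lambda>j. - K t j)"
      using scaled[OF \<open>s \<in> E\<close> \<open>t \<in> E\<close>, where \<sigma> = "-1"] counts that by simp
  qed
qed

lemma invariant_iff_balanced:
  fixes K :: "'a \<Rightarrow> 'k \<Rightarrow> int"
  assumes "finite T" and "finite Ks" and "\<forall>f\<in>E. K f \<in> Bcol Ks" and "is_partition P T"
  shows "(\<forall>F\<in>odd_maps T P. invariant (antisync E K) (sandwich_op E T c F)) \<longleftrightarrow> balanced E c K P"
  using balanced_if_invariant[OF assms] invariant_if_balanced[OF assms] by blast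

lemma finite_faces:
  assumes "simplicial_complex n X"
  shows "finite (faces X k)"
proof -
  have "X \<subseteq> Pow {1..n}"
    using assms unfolding simplicial_complex_def by blast
  then have "finite X"
    by (rule finite_subset) simp
  then show ?thesis
    unfolding faces_def by simp
qed

lemma anti_sync_eq_antisync: "anti_sync X k K = antisync (faces X k) K"
  by (auto simp: anti_sync_def chains_def antisync_def)

lemma W_maps_eq_odd_maps: "W_maps X k P = odd_maps (faces X k) P"
  by (simp add: W_maps_def odd_maps_def)

lemma up_op_eq_sandwich_op: "up_op X k F = sandwich_op (faces X k) (faces X (Suc k)) (\<lambda>e t. incid t e) F"
  unfolding up_op_def sandwich_op_def ..

lemma down_op_eq_sandwich_op: "down_op X k H = sandwich_op (faces X k) (faces X (k - 1)) incid H"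
  unfolding down_op_def sandwich_op_def ..

lemma up_balanced_eq_balanced: "up_balanced X k K P = balanced (faces X k) (\<lambda>e t. incid t e) K P"
  by (simp add: up_balanced_def balanced_def U_cnt_def signed_count_def col_up_def induced_coloring_def)

lemma down_balanced_eq_balanced: "down_balanced X k K Q = balanced (faces X k) incid K Q"
  by (simp add: down_balanced_def balanced_def D_cnt_def signed_count_def col_down_def
      induced_coloring_def)

theorem mainTheorem4:
  fixes n d :: nat and X :: "nat set set" and Ks :: "'k set"
    and K :: "nat set \<Rightarrow> 'k \<Rightarrow> int" and P Q :: "nat set set set"
  assumes "simplicial_complex n X"
    and "finite Ks"
    and "anti_coloring X (d + 1) Ks K"
    and "is_partition P (faces X (d + 2))"
    and "is_partition Q (faces X d)"
  shows "((\<forall>F\<in>W_maps X (d + 2) P. invariant (anti_sync X (d + 1) K) (up_op X (d + 1) F))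
            \<longleftrightarrow> up_balanced X (d + 1) K P)
       \<and> ((\<forall>H\<in>W_maps X d Q. invariant (anti_sync X (d + 1) K) (down_op X (d + 1) H))
            \<longleftrightarrow> down_balanced X (d + 1) K Q)"
proof -
  have fin: "finite (faces X k)" for k
    using finite_faces[OF assms(1)] .
  have K: "\<forall>f\<in>faces X (d + 1). K f \<in> Bcol Ks"
    using assms(3) unfolding anti_coloring_def .
  show ?thesis
    using invariant_iff_balanced[OF fin assms(2) K assms(4), of "\<lambda>e t. incid t e"]
      invariant_iff_balanced[OF fin assms(2) K assms(5), of incid]
    by (simp add: anti_sync_eq_antisync W_maps_eq_odd_maps up_op_eq_sandwich_op down_op_eq_sandwich_op
        up_balanced_eq_balanced down_balanced_eq_balanced)
qed

end
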